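(* Let $\pi_\xi(a_t\mid s_t,s_{t+k})$ be a family of conditional densities with scalar parameter $\xi$, let $p^\star(s_{t+k}\mid s_t)$ be a fixed (parameter-independent) conditional density and $p(s_t)$ a density of states, and define the marginal policy $$\pi_{\mu(\xi)}(a_t\mid s_t)=\int p^\star(s_{t+k}\mid s_t)\,\pi_\xi(a_t\mid s_t,s_{t+k})\,ds_{t+k}.$$ Let $$F_\mu=\mathbb{E}\Big[\Big(\tfrac{\partial}{\partial\xi}\ln\pi_{\mu(\xi)}(\mathbf{a}_t\mid\mathbf{s}_t)\Big)^2\Big],\qquad F_\xi=\mathbb{E}\Big[\Big(\tfrac{\partial}{\partial\xi}\ln\pi_\xi(\mathbf{a}_t\mid\mathbf{s}_t,\mathbf{s}_{t+k})\Big)^2\Big],$$ where $\mathbf{s}_t\sim p$, $\mathbf{s}_{t+k}\sim p^\star(\cdot\mid\mathbf{s}_t)$, $\mathbf{a}_t\sim\pi_\xi(\cdot\mid\mathbf{s}_t,\mathbf{s}_{t+k})$. Assume $F_\mu$ and $F_\xi$ exist and that regularity conditions permitting differentiation with respect to $\xi$ under the integral sign hold. Then $F_\xi/F_\mu\ge 1$.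
   Context: Here $\pi_{\mu(\xi)}$ is the behavior-cloning policy obtained by marginalizing the inverse dynamics policy $\pi_\xi$ over the true future-state distribution $p^\star$, so that its parameter is regarded as a function of $\xi$; $F_\mu$ and $F_\xi$ are the Fisher informations of the BC and IDM policies with respect to $\xi$. *)

theory Defs
  imports "HOL-Probability.Probability"
begin

text \<open>States live in a measure space nuS (reference measure for state densities),
actions in a measure space nuA (reference measure for action densities).
p s : density of states; pstar s s' : density of the future state s' given s;
piI xi s s' a : inverse dynamics policy density of a given (s, s').\<close>

definition marginal_policy ::
  "'s measure \<Rightarrow> ('s \<Rightarrow> 's \<Rightarrow> real) \<Rightarrow> (real \<Rightarrow> 's \<Rightarrow> 's \<Rightarrow> 'a \<Rightarrow> real) \<Rightarrow> real \<Rightarrow> 's \<Rightarrow> 'a \<Rightarrow> real"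
  where "marginal_policy nuS pstar piI xi s a = (\<integral>s'. pstar s s' * piI xi s s' a \<partial>nuS)"

definition joint_measure ::
  "'s measure \<Rightarrow> 'a measure \<Rightarrow> ('s \<Rightarrow> real) \<Rightarrow> ('s \<Rightarrow> 's \<Rightarrow> real) \<Rightarrow> (real \<Rightarrow> 's \<Rightarrow> 's \<Rightarrow> 'a \<Rightarrow> real) \<Rightarrow> real
   \<Rightarrow> ('s \<times> 's \<times> 'a) measure"
  where "joint_measure nuS nuA p pstar piI xi =
    density (nuS \<Otimes>\<^sub>M (nuS \<Otimes>\<^sub>M nuA)) (\<lambda>(s, s', a). ennreal (p s * pstar s s' * piI xi s s' a))"

definition fisher_idm where
  "fisher_idm nuS nuA p pstar piI xi =
    (\<integral>(s, s', a). (deriv (\<lambda>x. ln (piI x s s' a)) xi)\<^sup>2 \<partial>joint_measure nuS nuA p pstar piI xi)"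

definition fisher_bc where
  "fisher_bc nuS nuA p pstar piI xi =
    (\<integral>(s, s', a). (deriv (\<lambda>x. ln (marginal_policy nuS pstar piI x s a)) xi)\<^sup>2
       \<partial>joint_measure nuS nuA p pstar piI xi)"

end

theory Submission
  imports Defs
begin

(* For fixed (s, a) the behaviour-cloning score is the average of the inverse-dynamics scores
   d/dxi ln pi_xi(a | s, s') under the posterior weight pstar(s' | s) pi_xi(a | s, s') of s'.
   By Cauchy-Schwarz its square is at most the posterior average of the squared inverse-dynamics
   scores; integrating this fibrewise inequality over (s, a) gives F_mu <= F_xi. *)

lemma integrable_mult_of_integrable_mult_square:
  fixes w u :: "'b \<Rightarrow> real"
  assumes "integrable M w" "integrable M (\<lambda>x. w x * (u x)\<^sup>2)"
    and "\<And>x. x \<in> space M \<Longrightarrow> 0 \<le> w x" and "u \<in> borel_measurable M"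
  shows "integrable M (\<lambda>x. w x * u x)"
proof (rule Bochner_Integration.integrable_bound)
  show "integrable M (\<lambda>x. (w x + w x * (u x)\<^sup>2) / 2)"
    using assms(1,2) by simp
  show "AE x in M. norm (w x * u x) \<le> norm ((w x + w x * (u x)\<^sup>2) / 2)"
  proof (rule AE_I2)
    fix x assume x: "x \<in> space M"
    have "2 * \<bar>u x\<bar> \<le> 1 + (u x)\<^sup>2"
      using zero_le_power2[of "\<bar>u x\<bar> - 1"] by (simp add: power2_eq_square algebra_simps)
    from mult_left_mono[OF this assms(3)[OF x]]
    show "norm (w x * u x) \<le> norm ((w x + w x * (u x)\<^sup>2) / 2)"
      using assms(3)[OF x] by (simp add: abs_mult algebra_simps)
  qed
qed (use assms borel_measurable_integrable in measurable)

(* Weighted Cauchy-Schwarz: integrate w (u - h)^2 >= 0 for h the w-mean of u. *)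
lemma square_integral_div_le_nn_integral:
  fixes w u :: "'b \<Rightarrow> real"
  assumes w_int: "integrable M w" and w_nonneg: "\<And>x. x \<in> space M \<Longrightarrow> 0 \<le> w x"
    and u_meas: "u \<in> borel_measurable M" and mass_pos: "0 < (\<integral>x. w x \<partial>M)"
  shows "ennreal ((\<integral>x. w x * u x \<partial>M)\<^sup>2 / (\<integral>x. w x \<partial>M))
           \<le> (\<integral>\<^sup>+x. ennreal (w x * (u x)\<^sup>2) \<partial>M)"
proof (cases "integrable M (\<lambda>x. w x * (u x)\<^sup>2)")
  case False
  then have "(\<integral>\<^sup>+x. ennreal (w x * (u x)\<^sup>2) \<partial>M) = \<infinity>"
    using w_nonneg u_meas borel_measurable_integrable[OF w_int]
    by (auto intro!: integrableI_nonneg simp: top.not_eq_extremum)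
  then show ?thesis by simp
next
  case True
  define m where "m = (\<integral>x. w x \<partial>M)"
  define D where "D = (\<integral>x. w x * u x \<partial>M)"
  define I where "I = (\<integral>x. w x * (u x)\<^sup>2 \<partial>M)"
  define h where "h = D / m"
  have wu_int: "integrable M (\<lambda>x. w x * u x)"
    by (rule integrable_mult_of_integrable_mult_square[OF w_int True w_nonneg u_meas])
  have "0 \<le> (\<integral>x. w x * (u x - h)\<^sup>2 \<partial>M)"
    using w_nonneg by (intro Bochner_Integration.integral_nonneg) simp
  also have "(\<integral>x. w x * (u x - h)\<^sup>2 \<partial>M) = (\<integral>x. w x * (u x)\<^sup>2 - 2 * h * (w x * u x) + h\<^sup>2 * w x \<partial>M)"
    by (simp add: power2_eq_square algebra_simps)
  also have "\<dots> = I - 2 * h * D + h\<^sup>2 * m"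
    using True wu_int w_int by (simp add: I_def D_def m_def)
  also have "\<dots> = I - D\<^sup>2 / m"
    using mass_pos by (simp add: h_def m_def power2_eq_square field_simps)
  finally have "D\<^sup>2 / m \<le> I" by simp
  moreover have "(\<integral>\<^sup>+x. ennreal (w x * (u x)\<^sup>2) \<partial>M) = ennreal I"
    unfolding I_def using True w_nonneg by (intro nn_integral_eq_integral) auto
  ultimately show ?thesis by (simp add: D_def m_def ennreal_leI)
qed

lemma deriv_ln_comp:
  assumes "(f has_real_derivative f') (at x)" and "0 < f x"
  shows "deriv (\<lambda>x. ln (f x)) x = f' / f x"
  using DERIV_chain2[OF DERIV_ln_divide[OF assms(2)] assms(1)] by (simp add: DERIV_imp_deriv)

lemma integral_mult_pos:
  fixes k f :: "'b \<Rightarrow> real"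
  assumes k_meas: "k \<in> borel_measurable M" and k_nonneg: "\<And>y. y \<in> space M \<Longrightarrow> 0 \<le> k y"
    and k_nonzero: "(\<integral>y. k y \<partial>M) \<noteq> 0" and f_pos: "\<And>y. y \<in> space M \<Longrightarrow> 0 < f y"
    and kf_int: "integrable M (\<lambda>y. k y * f y)"
  shows "0 < (\<integral>y. k y * f y \<partial>M)"
proof -
  have kf_nonneg: "0 \<le> k y * f y" if "y \<in> space M" for y
    using k_nonneg[OF that] f_pos[OF that] by simp
  have "(\<integral>y. k y * f y \<partial>M) \<noteq> 0"
  proof
    assume "(\<integral>y. k y * f y \<partial>M) = 0"
    then have "AE y in M. k y * f y = 0"
      using kf_int kf_nonneg by (simp add: integral_nonneg_eq_0_iff_AE)
    with AE_space have "AE y in M. k y = 0"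
      by eventually_elim (metis f_pos less_irrefl mult_eq_0_iff)
    then have "(\<integral>y. k y \<partial>M) = 0"
      using integral_cong_AE[of k M "\<lambda>_. 0"] k_meas by simp
    with k_nonzero show False ..
  qed
  moreover have "0 \<le> (\<integral>y. k y * f y \<partial>M)"
    using kf_nonneg by (intro Bochner_Integration.integral_nonneg) auto
  ultimately show ?thesis by simp
qed

lemma mixture_score_square_le:
  fixes M :: "'b measure" and k dP :: "'b \<Rightarrow> real" and P :: "real \<Rightarrow> 'b \<Rightarrow> real"
  assumes c_nonneg: "0 \<le> c"
    and k_meas: "k \<in> borel_measurable M" and k_nonneg: "\<And>y. y \<in> space M \<Longrightarrow> 0 \<le> k y"
    and k_nonzero: "(\<integral>y. k y \<partial>M) \<noteq> 0"
    and P_meas: "P xi \<in> borel_measurable M" and P_pos: "\<And>y. y \<in> space M \<Longrightarrow> 0 < P xi y"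
    and dP_meas: "dP \<in> borel_measurable M"
    and mixture_int: "integrable M (\<lambda>y. k y * P xi y)"
    and P_deriv: "\<And>y. y \<in> space M \<Longrightarrow> ((\<lambda>x. P x y) has_real_derivative dP y) (at xi)"
    and mixture_deriv:
      "((\<lambda>x. \<integral>y. k y * P x y \<partial>M) has_real_derivative (\<integral>y. k y * dP y \<partial>M)) (at xi)"
  shows "(\<integral>\<^sup>+y. ennreal (c * k y * P xi y) * ennreal ((deriv (\<lambda>x. ln (\<integral>z. k z * P x z \<partial>M)) xi)\<^sup>2) \<partial>M)
         \<le> (\<integral>\<^sup>+y. ennreal (c * k y * P xi y) * ennreal ((deriv (\<lambda>x. ln (P x y)) xi)\<^sup>2) \<partial>M)"
proof -
  define w where "w y = k y * P xi y" for y
  define u where "u y = dP y / P xi y" for y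
  define m where "m = (\<integral>y. w y \<partial>M)"
  define D where "D = (\<integral>y. k y * dP y \<partial>M)"
  have w_nonneg: "0 \<le> w y" if "y \<in> space M" for y
    using k_nonneg[OF that] P_pos[OF that] by (simp add: w_def)
  have m_pos: "0 < m"
    unfolding m_def w_def by (rule integral_mult_pos[OF k_meas k_nonneg k_nonzero P_pos mixture_int])
  have "deriv (\<lambda>x. ln (\<integral>z. k z * P x z \<partial>M)) xi = D / m"
    using deriv_ln_comp[OF mixture_deriv] m_pos by (simp add: D_def m_def w_def)
  then have "(\<integral>\<^sup>+y. ennreal (c * k y * P xi y) * ennreal ((deriv (\<lambda>x. ln (\<integral>z. k z * P x z \<partial>M)) xi)\<^sup>2) \<partial>M)
      = (\<integral>\<^sup>+y. ennreal (c * w y) \<partial>M) * ennreal ((D / m)\<^sup>2)"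
    using k_meas P_meas by (simp add: w_def nn_integral_multc mult.assoc)
  also have "\<dots> = ennreal (c * (D\<^sup>2 / m))"
    using mixture_int w_nonneg m_pos c_nonneg
    by (simp add: nn_integral_eq_integral w_def m_def ennreal_mult'[symmetric] power2_eq_square)
  also have "D = (\<integral>y. w y * u y \<partial>M)"
    unfolding D_def using P_pos
    by (intro Bochner_Integration.integral_cong) (auto simp: w_def u_def less_imp_neq[symmetric])
  also have "ennreal (c * ((\<integral>y. w y * u y \<partial>M)\<^sup>2 / m))
      \<le> ennreal c * (\<integral>\<^sup>+y. ennreal (w y * (u y)\<^sup>2) \<partial>M)"
    unfolding ennreal_mult'[OF c_nonneg] m_def using mixture_int w_nonneg m_pos P_meas dP_meas
    by (intro mult_left_mono square_integral_div_le_nn_integral) (auto simp: w_def u_def m_def)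
  also have "\<dots> = (\<integral>\<^sup>+y. ennreal c * ennreal (w y * (u y)\<^sup>2) \<partial>M)"
    using k_meas P_meas dP_meas by (simp add: w_def u_def nn_integral_cmult)
  also have "\<dots> = (\<integral>\<^sup>+y. ennreal (c * k y * P xi y) * ennreal ((deriv (\<lambda>x. ln (P x y)) xi)\<^sup>2) \<partial>M)"
  proof (rule nn_integral_cong)
    fix y assume y: "y \<in> space M"
    have "deriv (\<lambda>x. ln (P x y)) xi = u y"
      unfolding u_def by (rule deriv_ln_comp[OF P_deriv[OF y] P_pos[OF y]])
    then show "ennreal c * ennreal (w y * (u y)\<^sup>2)
        = ennreal (c * k y * P xi y) * ennreal ((deriv (\<lambda>x. ln (P x y)) xi)\<^sup>2)"
      using c_nonneg by (simp add: w_def ennreal_mult'[symmetric] ennreal_mult''[symmetric] mult.assoc)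
  qed
  finally show ?thesis .
qed

lemma nn_integral_pair_measure_nested:
  assumes "sigma_finite_measure M2" and "sigma_finite_measure M3"
    and f: "f \<in> borel_measurable (M1 \<Otimes>\<^sub>M (M2 \<Otimes>\<^sub>M M3))"
  shows "integral\<^sup>N (M1 \<Otimes>\<^sub>M (M2 \<Otimes>\<^sub>M M3)) f = (\<integral>\<^sup>+x. \<integral>\<^sup>+z. \<integral>\<^sup>+y. f (x, y, z) \<partial>M2 \<partial>M3 \<partial>M1)"
proof -
  interpret M23: pair_sigma_finite M2 M3
    using assms(1,2) by (simp add: pair_sigma_finite_def)
  have "integral\<^sup>N (M1 \<Otimes>\<^sub>M (M2 \<Otimes>\<^sub>M M3)) f = (\<integral>\<^sup>+x. \<integral>\<^sup>+yz. f (x, yz) \<partial>(M2 \<Otimes>\<^sub>M M3) \<partial>M1)"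
    using f by (simp add: M23.nn_integral_fst)
  also have "\<dots> = (\<integral>\<^sup>+x. \<integral>\<^sup>+z. \<integral>\<^sup>+y. f (x, y, z) \<partial>M2 \<partial>M3 \<partial>M1)"
    using M23.nn_integral_snd[OF measurable_Pair2[OF f]] by (intro nn_integral_cong) simp
  finally show ?thesis .
qed

lemma ennreal_integral_density_nonneg:
  assumes f_meas: "f \<in> borel_measurable M"
    and g_int: "integrable (density M (\<lambda>x. ennreal (f x))) g" and g_nonneg: "\<And>x. 0 \<le> g x"
  shows "ennreal (\<integral>x. g x \<partial>density M (\<lambda>x. ennreal (f x)))
           = (\<integral>\<^sup>+x. ennreal (f x) * ennreal (g x) \<partial>M)"
proof -
  have "g \<in> borel_measurable M"
    using borel_measurable_integrable[OF g_int] by simp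
  then show ?thesis
    using g_int g_nonneg f_meas by (simp add: nn_integral_eq_integral[symmetric] nn_integral_density)
qed

lemma integral_joint_measure_mono:
  fixes F G :: "'s \<Rightarrow> 's \<Rightarrow> 'a \<Rightarrow> real"
  assumes sfS: "sigma_finite_measure nuS" and sfA: "sigma_finite_measure nuA"
    and p_meas: "p \<in> borel_measurable nuS"
    and pstar_meas: "(\<lambda>(s, s'). pstar s s') \<in> borel_measurable (nuS \<Otimes>\<^sub>M nuS)"
    and pi_meas: "(\<lambda>(s, s', a). piI xi s s' a) \<in> borel_measurable (nuS \<Otimes>\<^sub>M (nuS \<Otimes>\<^sub>M nuA))"
    and F_int: "integrable (joint_measure nuS nuA p pstar piI xi) (\<lambda>(s, s', a). F s s' a)"
    and G_int: "integrable (joint_measure nuS nuA p pstar piI xi) (\<lambda>(s, s', a). G s s' a)"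
    and F_nonneg: "\<And>s s' a. 0 \<le> F s s' a" and G_nonneg: "\<And>s s' a. 0 \<le> G s s' a"
    and fibre_le: "\<And>s a. s \<in> space nuS \<Longrightarrow> a \<in> space nuA \<Longrightarrow>
      (\<integral>\<^sup>+s'. ennreal (p s * pstar s s' * piI xi s s' a) * ennreal (F s s' a) \<partial>nuS)
      \<le> (\<integral>\<^sup>+s'. ennreal (p s * pstar s s' * piI xi s s' a) * ennreal (G s s' a) \<partial>nuS)"
  shows "(\<integral>(s, s', a). F s s' a \<partial>joint_measure nuS nuA p pstar piI xi)
           \<le> (\<integral>(s, s', a). G s s' a \<partial>joint_measure nuS nuA p pstar piI xi)"
proof -
  define N where "N = nuS \<Otimes>\<^sub>M (nuS \<Otimes>\<^sub>M nuA)"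
  define q where "q = (\<lambda>(s, s', a). p s * pstar s s' * piI xi s s' a)"
  have joint: "joint_measure nuS nuA p pstar piI xi = density N (\<lambda>z. ennreal (q z))"
    unfolding joint_measure_def N_def q_def by (simp add: case_prod_beta')
  have q_meas: "q \<in> borel_measurable N"
    using pstar_meas pi_meas[unfolded case_prod_beta'] p_meas unfolding q_def N_def
    by measurable
  have nested: "ennreal (\<integral>(s, s', a). H s s' a \<partial>joint_measure nuS nuA p pstar piI xi)
      = (\<integral>\<^sup>+s. \<integral>\<^sup>+a. \<integral>\<^sup>+s'. ennreal (q (s, s', a)) * ennreal (H s s' a) \<partial>nuS \<partial>nuA \<partial>nuS)"
    if H_int: "integrable (joint_measure nuS nuA p pstar piI xi) (\<lambda>(s, s', a). H s s' a)"
      and H_nonneg: "\<And>s s' a. 0 \<le> H s s' a" for H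
  proof -
    have "(\<lambda>(s, s', a). H s s' a) \<in> borel_measurable N"
      using borel_measurable_integrable[OF H_int] by (simp add: joint)
    then show ?thesis
      using H_int H_nonneg q_meas sfS sfA unfolding joint N_def
      by (simp add: ennreal_integral_density_nonneg nn_integral_pair_measure_nested split_beta')
  qed
  have "ennreal (\<integral>(s, s', a). F s s' a \<partial>joint_measure nuS nuA p pstar piI xi)
      \<le> ennreal (\<integral>(s, s', a). G s s' a \<partial>joint_measure nuS nuA p pstar piI xi)"
    unfolding nested[OF F_int F_nonneg] nested[OF G_int G_nonneg]
    by (rule nn_integral_mono, rule nn_integral_mono) (simp add: q_def fibre_le)
  moreover have "0 \<le> (\<integral>(s, s', a). G s s' a \<partial>joint_measure nuS nuA p pstar piI xi)"
    using G_nonneg by (intro Bochner_Integration.integral_nonneg) (simp split: prod.split)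
  ultimately show ?thesis
    by (simp add: ennreal_le_iff)
qed

theorem lemma2:
  fixes nuS :: "'s measure" and nuA :: "'a measure"
    and p :: "'s \<Rightarrow> real" and pstar :: "'s \<Rightarrow> 's \<Rightarrow> real"
    and piI :: "real \<Rightarrow> 's \<Rightarrow> 's \<Rightarrow> 'a \<Rightarrow> real"
    and dpi :: "'s \<Rightarrow> 's \<Rightarrow> 'a \<Rightarrow> real"
    and xi :: real
  assumes sfS: "sigma_finite_measure nuS" and sfA: "sigma_finite_measure nuA"
    and p_meas: "p \<in> borel_measurable nuS"
    and p_nonneg: "\<And>s. s \<in> space nuS \<Longrightarrow> 0 \<le> p s"
    and p_int: "integrable nuS p" and p_norm: "(\<integral>s. p s \<partial>nuS) = 1"
    and pstar_meas: "(\<lambda>(s, s'). pstar s s') \<in> borel_measurable (nuS \<Otimes>\<^sub>M nuS)"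
    and pstar_nonneg: "\<And>s s'. s \<in> space nuS \<Longrightarrow> s' \<in> space nuS \<Longrightarrow> 0 \<le> pstar s s'"
    and pstar_int: "\<And>s. s \<in> space nuS \<Longrightarrow> integrable nuS (pstar s)"
    and pstar_norm: "\<And>s. s \<in> space nuS \<Longrightarrow> (\<integral>s'. pstar s s' \<partial>nuS) = 1"
    and pi_meas: "\<And>x. (\<lambda>(s, s', a). piI x s s' a) \<in> borel_measurable (nuS \<Otimes>\<^sub>M (nuS \<Otimes>\<^sub>M nuA))"
    and pi_nonneg: "\<And>x s s' a. s \<in> space nuS \<Longrightarrow> s' \<in> space nuS \<Longrightarrow> a \<in> space nuA
                      \<Longrightarrow> 0 \<le> piI x s s' a"
    and pi_int: "\<And>x s s'. s \<in> space nuS \<Longrightarrow> s' \<in> space nuS \<Longrightarrow> integrable nuA (piI x s s')"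
    and pi_norm: "\<And>x s s'. s \<in> space nuS \<Longrightarrow> s' \<in> space nuS \<Longrightarrow> (\<integral>a. piI x s s' a \<partial>nuA) = 1"
    and pi_pos: "\<And>s s' a. s \<in> space nuS \<Longrightarrow> s' \<in> space nuS \<Longrightarrow> a \<in> space nuA
                      \<Longrightarrow> 0 < piI xi s s' a"
    and dpi_meas: "(\<lambda>(s, s', a). dpi s s' a) \<in> borel_measurable (nuS \<Otimes>\<^sub>M (nuS \<Otimes>\<^sub>M nuA))"
    and pi_deriv: "\<And>s s' a. s \<in> space nuS \<Longrightarrow> s' \<in> space nuS \<Longrightarrow> a \<in> space nuA
                      \<Longrightarrow> ((\<lambda>x. piI x s s' a) has_real_derivative dpi s s' a) (at xi)"
    and marg_int: "\<And>s a. s \<in> space nuS \<Longrightarrow> a \<in> space nuA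
                      \<Longrightarrow> integrable nuS (\<lambda>s'. pstar s s' * piI xi s s' a)"
    and diff_under_int: "\<And>s a. s \<in> space nuS \<Longrightarrow> a \<in> space nuA
                      \<Longrightarrow> ((\<lambda>x. marginal_policy nuS pstar piI x s a) has_real_derivative
                            (\<integral>s'. pstar s s' * dpi s s' a \<partial>nuS)) (at xi)"
    and F_xi_exists: "integrable (joint_measure nuS nuA p pstar piI xi)
                        (\<lambda>(s, s', a). (deriv (\<lambda>x. ln (piI x s s' a)) xi)\<^sup>2)"
    and F_mu_exists: "integrable (joint_measure nuS nuA p pstar piI xi)
                        (\<lambda>(s, s', a). (deriv (\<lambda>x. ln (marginal_policy nuS pstar piI x s a)) xi)\<^sup>2)"
    and F_mu_pos: "0 < fisher_bc nuS nuA p pstar piI xi"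
  shows "fisher_idm nuS nuA p pstar piI xi / fisher_bc nuS nuA p pstar piI xi \<ge> 1"
proof -
  have fibre_le: "(\<integral>\<^sup>+s'. ennreal (p s * pstar s s' * piI xi s s' a)
        * ennreal ((deriv (\<lambda>x. ln (\<integral>z. pstar s z * piI x s z a \<partial>nuS)) xi)\<^sup>2) \<partial>nuS)
      \<le> (\<integral>\<^sup>+s'. ennreal (p s * pstar s s' * piI xi s s' a)
        * ennreal ((deriv (\<lambda>x. ln (piI x s s' a)) xi)\<^sup>2) \<partial>nuS)"
    if s: "s \<in> space nuS" and a: "a \<in> space nuA" for s a
  proof (rule mixture_score_square_le)
    have fibre: "(\<lambda>s'. (s, s', a)) \<in> measurable nuS (nuS \<Otimes>\<^sub>M (nuS \<Otimes>\<^sub>M nuA))"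
      using s a by measurable
    show "pstar s \<in> borel_measurable nuS"
      using measurable_Pair2[OF pstar_meas s] by simp
    show "(\<lambda>s'. piI xi s s' a) \<in> borel_measurable nuS"
      using measurable_compose[OF fibre pi_meas[of xi]] by simp
    show "(\<lambda>s'. dpi s s' a) \<in> borel_measurable nuS"
      using measurable_compose[OF fibre dpi_meas] by simp
  qed (use s a p_nonneg pstar_nonneg pstar_norm pi_pos marg_int pi_deriv
         diff_under_int[unfolded marginal_policy_def] in auto)
  have "fisher_bc nuS nuA p pstar piI xi \<le> fisher_idm nuS nuA p pstar piI xi"
    unfolding fisher_bc_def fisher_idm_def marginal_policy_def
    by (rule integral_joint_measure_mono[OF sfS sfA p_meas pstar_meas pi_meas
          F_mu_exists[unfolded marginal_policy_def] F_xi_exists]) (simp_all add: fibre_le)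
  then show ?thesis
    using F_mu_pos by (simp add: le_divide_eq_1)
qed

end
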